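(* Let $\omega$ be a Schwarz-type function with $\|\omega\|_\infty<1$ and let $F=\ell\circ\omega$. If $\varphi$ is a Schwarz-type function with $\|\varphi\|_\infty<\frac{1-\|\omega\|_\infty}{1+\|\omega\|_\infty}$, then $T_{F,\varphi}(f)\in\mathcal{P}$ for every $f\in\mathcal{P}$.
   Context: $\mathbb{D}$ is the open unit disk. $\mathcal{P}$ is the set of analytic $f$ on $\mathbb{D}$ with $\mathrm{Re}\,f>0$ and $f(0)=1$. A Schwarz-type function is an analytic $\varphi:\mathbb{D}\to\mathbb{D}$ with $\varphi(0)=0$. $\ell(z)=\frac{1+z}{1-z}$. $\|\varphi\|_\infty=\sup_{z\in\mathbb{D}}|\varphi(z)|$. $T_{F,\varphi}(f)=F\cdot(f\circ\varphi)$. *)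

theory Defs
  imports "HOL-Complex_Analysis.Complex_Analysis"
begin

definition unit_disk :: "complex set" where
  "unit_disk = ball 0 1"

definition carath_P :: "(complex \<Rightarrow> complex) set" where
  "carath_P = {f. f holomorphic_on unit_disk \<and> (\<forall>z\<in>unit_disk. Re (f z) > 0) \<and> f 0 = 1}"

definition schwarz_type :: "(complex \<Rightarrow> complex) \<Rightarrow> bool" where
  "schwarz_type \<phi> \<longleftrightarrow> \<phi> holomorphic_on unit_disk \<and> \<phi> ` unit_disk \<subseteq> unit_disk \<and> \<phi> 0 = 0"

definition ell :: "complex \<Rightarrow> complex" where
  "ell z = (1 + z) / (1 - z)"

definition sup_norm :: "(complex \<Rightarrow> complex) \<Rightarrow> real" where
  "sup_norm \<phi> = (SUP z\<in>unit_disk. cmod (\<phi> z))"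

definition weighted_comp :: "(complex \<Rightarrow> complex) \<Rightarrow> (complex \<Rightarrow> complex) \<Rightarrow> (complex \<Rightarrow> complex) \<Rightarrow> (complex \<Rightarrow> complex)" where
  "weighted_comp F \<phi> f = (\<lambda>z. F z * f (\<phi> z))"

end

theory Submission imports Defs begin

text \<open>Every \<open>f \<in> \<P>\<close> is \<open>\<ell> \<circ> \<psi>\<close> with \<open>\<psi> = (f - 1)/(f + 1)\<close> of Schwarz type, so by the
  Schwarz lemma \<open>f (\<phi> z) = \<ell> v\<close> with \<open>|v| \<le> \<parallel>\<phi>\<parallel>\<^sub>\<infinity>\<close>, while \<open>F z = \<ell> u\<close> with \<open>|u| \<le> \<parallel>\<omega>\<parallel>\<^sub>\<infinity>\<close>.
  Multiplying numerator and denominator of \<open>\<ell> u\<close> by \<open>cnj (1 - u)\<close> shows that \<open>Re (\<ell> u \<cdot> \<ell> v)\<close>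
  has the sign of \<open>(1 - |u|\<^sup>2)(1 - |v|\<^sup>2) - 4 Im u Im v\<close>, which is positive once
  \<open>4|u||v| < (1 - |u|\<^sup>2)(1 - |v|\<^sup>2)\<close>. For \<open>|u| \<le> a\<close> this holds whenever \<open>|v| < (1 - a)/(1 + a)\<close>,
  the value of \<open>|v|\<close> at which both sides agree for \<open>|u| = a\<close>.\<close>

lemma schwarz_type_norm_le:
  assumes "schwarz_type \<psi>" "z \<in> unit_disk"
  shows "cmod (\<psi> z) \<le> cmod z"
  using assms Schwarz_Lemma(1)[of \<psi> z]
  by (auto simp: schwarz_type_def unit_disk_def image_subset_iff)

lemma schwarz_type_norm_le_sup_norm:
  assumes "schwarz_type g" "z \<in> unit_disk"
  shows "cmod (g z) \<le> sup_norm g"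
proof -
  have "bdd_above ((\<lambda>z. cmod (g z)) ` unit_disk)"
    using assms(1) unfolding schwarz_type_def bdd_above_def unit_disk_def
    by (intro exI[of _ 1]) (auto simp: less_imp_le)
  then show ?thesis
    unfolding sup_norm_def using assms(2) by (rule cSUP_upper2) simp
qed

lemma carath_P_eq_ell_comp_schwarz:
  assumes "f \<in> carath_P"
  obtains \<psi> where "schwarz_type \<psi>" "\<And>z. z \<in> unit_disk \<Longrightarrow> f z = ell (\<psi> z)"
proof
  define \<psi> where "\<psi> = (\<lambda>z. (f z - 1) / (f z + 1))"
  have hol: "f holomorphic_on unit_disk" and pos: "\<And>z. z \<in> unit_disk \<Longrightarrow> Re (f z) > 0"
    and f0: "f 0 = 1"
    using assms by (auto simp: carath_P_def)
  have nz: "f z + 1 \<noteq> 0" if "z \<in> unit_disk" for z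
    using pos[OF that] by (auto simp: complex_eq_iff)
  have "cmod (\<psi> z) < 1" if "z \<in> unit_disk" for z
  proof -
    have "(cmod (f z - 1))\<^sup>2 < (cmod (f z + 1))\<^sup>2"
      using pos[OF that] unfolding cmod_power2 by (simp add: power2_eq_square algebra_simps)
    then have "cmod (f z - 1) < cmod (f z + 1)"
      by (rule power_less_imp_less_base) simp
    then show ?thesis
      using nz[OF that] by (simp add: \<psi>_def norm_divide divide_simps)
  qed
  then have "\<psi> ` unit_disk \<subseteq> unit_disk"
    by (auto simp: unit_disk_def)
  moreover have "\<psi> holomorphic_on unit_disk"
    unfolding \<psi>_def using hol nz by (intro holomorphic_intros) auto
  moreover have "\<psi> 0 = 0"
    by (simp add: \<psi>_def f0)
  ultimately show "schwarz_type \<psi>"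
    by (simp add: schwarz_type_def)
  show "f z = ell (\<psi> z)" if "z \<in> unit_disk" for z
    using nz[OF that] by (simp add: ell_def \<psi>_def divide_simps)
qed

lemma ell_eq_divide_norm_square:
  assumes "u \<noteq> 1"
  shows "ell u = (1 + u) * cnj (1 - u) / of_real ((cmod (1 - u))\<^sup>2)"
proof -
  have "1 - u \<noteq> 0" using assms by simp
  then have "cnj (1 - u) \<noteq> 0" by simp
  have "(1 - u) * cnj (1 - u) = of_real ((cmod (1 - u))\<^sup>2)"
    by (simp only: complex_mult_cnj cmod_power2)
  then show ?thesis
    using \<open>1 - u \<noteq> 0\<close> \<open>cnj (1 - u) \<noteq> 0\<close> unfolding ell_def by (metis mult_divide_mult_cancel_right)
qed

lemma Re_ell_mult_ell_pos:
  fixes u v :: complex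
  assumes "u \<noteq> 1" "v \<noteq> 1" "4 * cmod u * cmod v < (1 - (cmod u)\<^sup>2) * (1 - (cmod v)\<^sup>2)"
  shows "Re (ell u * ell v) > 0"
proof -
  define p where "p = (1 + u) * cnj (1 - u)"
  define q where "q = (1 + v) * cnj (1 - v)"
  have p: "Re p = 1 - (cmod u)\<^sup>2" "Im p = 2 * Im u"
    unfolding p_def cmod_power2 by (simp_all add: algebra_simps power2_eq_square)
  have q: "Re q = 1 - (cmod v)\<^sup>2" "Im q = 2 * Im v"
    unfolding q_def cmod_power2 by (simp_all add: algebra_simps power2_eq_square)
  have "Im u * Im v \<le> \<bar>Im u\<bar> * \<bar>Im v\<bar>"
    by (simp add: abs_mult[symmetric])
  also have "\<dots> \<le> cmod u * cmod v"
    by (simp add: abs_Im_le_cmod mult_mono)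
  finally have "Re (p * q) > 0"
    using assms(3) p q by simp
  moreover have "ell u * ell v = p * q / of_real ((cmod (1 - u))\<^sup>2 * (cmod (1 - v))\<^sup>2)"
    using assms(1,2) by (simp add: ell_eq_divide_norm_square p_def q_def)
  ultimately show ?thesis
    using assms(1,2) by (simp add: Re_divide_of_real)
qed

lemma mult_bound_below_threshold:
  fixes a r :: real
  assumes "0 \<le> a" "a < 1" "0 \<le> r" "r < (1 - a) / (1 + a)"
  shows "4 * a * r < (1 - a\<^sup>2) * (1 - r\<^sup>2)"
proof -
  define r0 where "r0 = (1 - a) / (1 + a)"
  have "(1 - a\<^sup>2) * (1 - r0\<^sup>2) = 4 * a * r0"
    using assms(1) unfolding r0_def by (simp add: divide_simps power2_eq_square) algebra
  then have "(1 - a\<^sup>2) * (1 - r\<^sup>2) - 4 * a * r = (1 - a\<^sup>2) * (r0\<^sup>2 - r\<^sup>2) + 4 * a * (r0 - r)"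
    by (simp add: algebra_simps)
  moreover have "0 < 1 - a\<^sup>2" "r\<^sup>2 < r0\<^sup>2"
    using assms power_strict_mono[of a 1 2] power_strict_mono[of r r0 2] by (auto simp: r0_def)
  ultimately show ?thesis
    using assms r0_def by (smt (verit) mult_pos_pos mult_nonneg_nonneg)
qed

lemma Re_ell_mult_ell_pos_threshold:
  fixes u v :: complex and a :: real
  assumes "cmod u \<le> a" "a < 1" "cmod v < (1 - a) / (1 + a)"
  shows "Re (ell u * ell v) > 0"
proof (rule Re_ell_mult_ell_pos)
  have "(1 - a) / (1 + a) \<le> (1 - s) / (1 + s)" if "0 \<le> s" "s \<le> a" for s :: real
    using that assms(2) by (simp add: divide_simps algebra_simps)
  with assms(1,3) have v_bound: "cmod v < (1 - cmod u) / (1 + cmod u)"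
    by (meson norm_ge_zero less_le_trans)
  moreover have "(1 - cmod u) / (1 + cmod u) \<le> 1"
    using norm_ge_zero[of u] by (simp only: divide_le_eq_1) linarith
  ultimately have "cmod v < 1"
    by linarith
  then show "u \<noteq> 1" "v \<noteq> 1"
    using assms(1,2) by auto
  show "4 * cmod u * cmod v < (1 - (cmod u)\<^sup>2) * (1 - (cmod v)\<^sup>2)"
    using mult_bound_below_threshold v_bound assms(1,2) by simp
qed

lemma weighted_comp_holomorphic:
  assumes "F holomorphic_on unit_disk" "f holomorphic_on unit_disk" "schwarz_type \<phi>"
  shows "weighted_comp F \<phi> f holomorphic_on unit_disk"
proof -
  have "(f \<circ> \<phi>) holomorphic_on unit_disk"
    using assms(3) holomorphic_on_compose_gen[OF _ assms(2)] by (auto simp: schwarz_type_def)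
  then show ?thesis
    unfolding weighted_comp_def using assms(1) holomorphic_on_mult by (auto simp: o_def)
qed

lemma ell_comp_schwarz_holomorphic:
  assumes "schwarz_type \<omega>"
  shows "(ell \<circ> \<omega>) holomorphic_on unit_disk"
proof -
  have "\<omega> z \<noteq> 1" if "z \<in> unit_disk" for z
    using assms that by (fastforce simp: schwarz_type_def unit_disk_def)
  then show ?thesis
    using assms unfolding ell_def o_def schwarz_type_def by (intro holomorphic_intros) auto
qed

theorem corollary3p6:
  fixes \<omega> \<phi> :: "complex \<Rightarrow> complex"
  assumes "schwarz_type \<omega>" and "sup_norm \<omega> < 1"
    and "schwarz_type \<phi>"
    and "sup_norm \<phi> < (1 - sup_norm \<omega>) / (1 + sup_norm \<omega>)"
    and "f \<in> carath_P"
  shows "weighted_comp (ell \<circ> \<omega>) \<phi> f \<in> carath_P"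
proof -
  obtain \<psi> where \<psi>: "schwarz_type \<psi>" and f_eq: "\<And>z. z \<in> unit_disk \<Longrightarrow> f z = ell (\<psi> z)"
    using carath_P_eq_ell_comp_schwarz[OF assms(5)] by blast
  have "Re (weighted_comp (ell \<circ> \<omega>) \<phi> f z) > 0" if z: "z \<in> unit_disk" for z
  proof -
    have \<phi>z: "\<phi> z \<in> unit_disk" using assms(3) z by (auto simp: schwarz_type_def)
    have "cmod (\<psi> (\<phi> z)) \<le> sup_norm \<phi>"
      using schwarz_type_norm_le[OF \<psi> \<phi>z] schwarz_type_norm_le_sup_norm[OF assms(3) z] by simp
    then show ?thesis
      using Re_ell_mult_ell_pos_threshold[OF schwarz_type_norm_le_sup_norm[OF assms(1) z] assms(2)]
        assms(4) f_eq[OF \<phi>z] by (simp add: weighted_comp_def)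
  qed
  moreover have "weighted_comp (ell \<circ> \<omega>) \<phi> f holomorphic_on unit_disk"
    using assms(3,5) ell_comp_schwarz_holomorphic[OF assms(1)]
    by (intro weighted_comp_holomorphic) (auto simp: carath_P_def)
  moreover have "weighted_comp (ell \<circ> \<omega>) \<phi> f 0 = 1"
    using assms(1,3,5) by (simp add: weighted_comp_def schwarz_type_def ell_def carath_P_def)
  ultimately show ?thesis unfolding carath_P_def by blast
qed

end
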